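(* Under the standing assumptions below, if $\delta:\mathbb{S}^m\to\mathbb{R}^n$ is continuous with $\Gamma_0[\delta]=0$, then $\delta(\phi)\in\operatorname{span}\{\partial_t\gamma(\phi,0),\partial_{\phi_1}\gamma(\phi,0),\dots,\partial_{\phi_m}\gamma(\phi,0)\}$ for every $\phi\in\mathbb{S}^m$, i.e. the right nullspace of $\Gamma_0$ consists of functions tangent to the torus $(\phi,t)\mapsto\gamma(\phi,t)$ at $t=0$.
   Context: Let $\mathbb{S}=\mathbb{R}/\mathbb{Z}$, $m\ge 1$, $n\ge1$, $f:\mathbb{R}^n\to\mathbb{R}^n$ smooth, $T>0$. Let $u:\mathbb{S}^{m+1}\to\mathbb{R}^n$ be smooth and $\rho\in\mathbb{R}^m$ be such that $1,\rho_1,\dots,\rho_m$ are rationally independent, and let $\gamma(\phi,t):=u(\phi+\rho t,t)$ solve $\partial_t\gamma=Tf(\gamma)$ for every $\phi\in\mathbb{S}^m$. Let $X(\phi,t)$ solve $\partial_tX=T\,\mathrm{D}f(\gamma(\phi,t))X$, $X(\phi,0)=I_n$. Define $\Gamma_0[\delta](\phi):=X(\phi-\rho,1)\delta(\phi-\rho)-\delta(\phi)$ for continuous $\delta:\mathbb{S}^m\to\mathbb{R}^n$. Normal hyperbolicity assumption: there are continuous $w_t,w_{\phi_1},\dots,w_{\phi_m}:\mathbb{S}^m\to\mathbb{R}^n$ such that $$Q(\phi,t):=X(\phi,t)\Big(I_n-\partial_t\gamma(\phi,0)w_t^\mathsf{T}(\phi)-\sum_{i=1}^m\partial_{\phi_i}\gamma(\phi,0)w_{\phi_i}^\mathsf{T}(\phi)\Big)X^{-1}(\phi,t)$$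 is a smooth family of projections with $Q(\phi,t+1)=Q(\phi+\rho,t)$, and $\Gamma_0$ is a bijection with bounded inverse on the space of functions $\phi\mapsto Q(\phi,0)\delta(\phi)$. *)

theory Defs
  imports "HOL-Analysis.Analysis"
begin

fun Ck :: "nat \<Rightarrow> ('a::real_normed_vector \<Rightarrow> 'b::real_normed_vector) \<Rightarrow> bool" where
  "Ck 0 f = continuous_on UNIV f"
| "Ck (Suc k) f = (continuous_on UNIV f \<and> f differentiable_on UNIV \<and>
      (\<forall>v. Ck k (\<lambda>x. frechet_derivative f (at x) v)))"

definition smooth :: "('a::real_normed_vector \<Rightarrow> 'b::real_normed_vector) \<Rightarrow> bool" where
  "smooth f \<longleftrightarrow> (\<forall>k. Ck k f)"

text \<open>Functions on the torus S^m = (R/Z)^m are 1-periodic functions on R^m.\<close>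
definition torus_periodic :: "(real^'m \<Rightarrow> 'b) \<Rightarrow> bool" where
  "torus_periodic g \<longleftrightarrow> (\<forall>\<phi> i. g (\<phi> + axis i 1) = g \<phi>)"

definition torus_cont :: "(real^'m \<Rightarrow> 'b::topological_space) \<Rightarrow> bool" where
  "torus_cont g \<longleftrightarrow> continuous_on UNIV g \<and> torus_periodic g"

definition rat_indep :: "real^'m \<Rightarrow> bool" where
  "rat_indep \<rho> \<longleftrightarrow> (\<forall>(k0::int) (k::'m \<Rightarrow> int).
      of_int k0 + (\<Sum>i\<in>UNIV. of_int (k i) * \<rho> $ i) = 0 \<longrightarrow> k0 = 0 \<and> (\<forall>i. k i = 0))"

definition gam :: "(real^'m \<Rightarrow> real \<Rightarrow> real^'n) \<Rightarrow> real^'m \<Rightarrow> real^'m \<Rightarrow> real \<Rightarrow> real^'n" where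
  "gam u \<rho> \<phi> t = u (\<phi> + t *\<^sub>R \<rho>) t"

definition dt_gam :: "(real^'m \<Rightarrow> real \<Rightarrow> real^'n) \<Rightarrow> real^'m \<Rightarrow> real^'m \<Rightarrow> real^'n" where
  "dt_gam u \<rho> \<phi> = vector_derivative (\<lambda>s. gam u \<rho> \<phi> s) (at 0)"

definition dphi_gam :: "(real^'m \<Rightarrow> real \<Rightarrow> real^'n) \<Rightarrow> real^'m \<Rightarrow> 'm \<Rightarrow> real^'m \<Rightarrow> real^'n" where
  "dphi_gam u \<rho> i \<phi> = vector_derivative (\<lambda>s. gam u \<rho> (\<phi> + s *\<^sub>R axis i 1) 0) (at 0)"

definition outer :: "real^'n \<Rightarrow> real^'n \<Rightarrow> real^'n^'n" where
  "outer a b = (\<chi> r c. a $ r * b $ c)"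

definition Dmat :: "(real^'n \<Rightarrow> real^'n) \<Rightarrow> real^'n \<Rightarrow> real^'n^'n" where
  "Dmat f x = matrix (frechet_derivative f (at x))"

definition Gamma0 :: "(real^'m \<Rightarrow> real \<Rightarrow> real^'n^'n) \<Rightarrow> real^'m \<Rightarrow> (real^'m \<Rightarrow> real^'n) \<Rightarrow> real^'m \<Rightarrow> real^'n" where
  "Gamma0 X \<rho> \<delta> = (\<lambda>\<phi>. X (\<phi> - \<rho>) 1 *v \<delta> (\<phi> - \<rho>) - \<delta> \<phi>)"

definition supnorm :: "(real^'m \<Rightarrow> real^'n) \<Rightarrow> real" where
  "supnorm g = (SUP \<phi>. norm (g \<phi>))"

definition Qproj :: "(real^'m \<Rightarrow> real \<Rightarrow> real^'n) \<Rightarrow> real^'m \<Rightarrow> (real^'m \<Rightarrow> real \<Rightarrow> real^'n^'n)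
    \<Rightarrow> (real^'m \<Rightarrow> real^'n) \<Rightarrow> ('m \<Rightarrow> real^'m \<Rightarrow> real^'n) \<Rightarrow> real^'m \<Rightarrow> real \<Rightarrow> real^'n^'n" where
  "Qproj u \<rho> X wt wphi \<phi> t =
     X \<phi> t ** (mat 1 - outer (dt_gam u \<rho> \<phi>) (wt \<phi>)
                 - (\<Sum>i\<in>UNIV. outer (dphi_gam u \<rho> i \<phi>) (wphi i \<phi>)))
       ** matrix_inv (X \<phi> t)"

definition normally_hyperbolic ::
  "(real^'m \<Rightarrow> real \<Rightarrow> real^'n) \<Rightarrow> real^'m \<Rightarrow> (real^'m \<Rightarrow> real \<Rightarrow> real^'n^'n) \<Rightarrow> bool" where
  "normally_hyperbolic u \<rho> X \<longleftrightarrow>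
    (\<exists>wt wphi. torus_cont wt \<and> (\<forall>i. torus_cont (wphi i)) \<and>
      (let Q = Qproj u \<rho> X wt wphi;
           V = {(\<lambda>\<phi>. Q \<phi> 0 *v \<delta> \<phi>) | \<delta>. torus_cont \<delta>} in
        smooth (\<lambda>p. Q (fst p) (snd p)) \<and>
        (\<forall>\<phi> t. Q \<phi> t ** Q \<phi> t = Q \<phi> t) \<and>
        (\<forall>\<phi> t. Q \<phi> (t + 1) = Q (\<phi> + \<rho>) t) \<and>
        bij_betw (Gamma0 X \<rho>) V V \<and>
        (\<exists>C. \<forall>g\<in>V. supnorm g \<le> C * supnorm (Gamma0 X \<rho> g))))"

end

theory Submission
  imports Defs
begin

text \<open>A vector killed by \<open>Q(\<phi>,0) = I - \<partial>\<^sub>t\<gamma> w\<^sub>t\<^sup>T - \<Sum>\<^sub>i \<partial>\<^sub>\<phi>\<^sub>i\<gamma> w\<^sub>\<phi>\<^sub>i\<^sup>T\<close> is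
  explicitly a combination of the tangent vectors \<open>\<partial>\<^sub>t\<gamma>, \<partial>\<^sub>\<phi>\<^sub>i\<gamma>\<close>.  The periodicity \<open>Q(\<phi>,t+1) = Q(\<phi>+\<rho>,t)\<close>,
  together with invertibility of the fundamental matrix, says that \<open>\<Gamma>\<^sub>0\<close> commutes with
  multiplication by \<open>Q(\<cdot>,0)\<close>.  Hence if \<open>\<Gamma>\<^sub>0[\<delta>] = 0\<close> then also \<open>\<Gamma>\<^sub>0[Q(\<cdot>,0)\<delta>] = 0\<close>, and
  injectivity of \<open>\<Gamma>\<^sub>0\<close> on the range of \<open>Q(\<cdot>,0)\<close> forces \<open>Q(\<cdot>,0)\<delta> = 0\<close>, i.e. \<open>\<delta>\<close> is tangent.
  Invertibility of \<open>X(\<phi>,1)\<close> follows from backward uniqueness for linear ODEs, proved with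
  the Gronwall-type weight \<open>|x(t)|\<^sup>2 e\<^sup>2\<^sup>K\<^sup>t\<close>.\<close>

lemma bounded_linear_matrix_vector_mult_left:
  "bounded_linear (\<lambda>M::real^'n^'m. M *v v)"
proof -
  have "linear (\<lambda>M::real^'n^'m. M *v v)"
    by (rule linearI) (simp_all add: matrix_vector_mult_add_rdistrib scaleR_matrix_vector_assoc)
  then show ?thesis by (simp add: linear_conv_bounded_linear)
qed

lemma matrix_vector_mult_sum_left:
  "(\<Sum>i\<in>S. M i) *v (x::real^'n) = (\<Sum>i\<in>S. (M i :: real^'n^'k) *v x)"
  using linear_sum[OF bounded_linear.linear[OF bounded_linear_matrix_vector_mult_left], of M S]
  by simp

lemma outer_mult_vec: "outer a b *v x = (b \<bullet> x) *\<^sub>R a"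
  by (simp add: outer_def vec_eq_iff matrix_vector_mult_def inner_vec_def sum_distrib_left
      algebra_simps)

lemma matrix_inv_left: "invertible (A::real^'n^'n) \<Longrightarrow> matrix_inv A ** A = mat 1"
  and matrix_inv_right: "invertible (A::real^'n^'n) \<Longrightarrow> A ** matrix_inv A = mat 1"
  using someI_ex[of "\<lambda>B. A ** B = mat 1 \<and> B ** A = mat 1"]
  unfolding matrix_inv_def invertible_def by auto

lemma matrix_inv_mat_1: "matrix_inv (mat 1 :: real^'n^'n) = mat 1"
  by (metis invertible_def matrix_inv_left matrix_mul_lid matrix_mul_rid)

lemma conjugate_matrix_vector_mult:
  assumes "invertible (M::real^'n^'n)"
  shows "(M ** P ** matrix_inv M) *v (M *v y) = M *v (P *v y)"
proof -
  have "M ** P ** matrix_inv M ** M = M ** P"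
    by (metis matrix_mul_assoc matrix_inv_left[OF assms] matrix_mul_rid)
  then show ?thesis by (simp add: matrix_vector_mul_assoc)
qed

lemma kernel_of_tangent_projection:
  fixes x :: "real^'n"
  assumes "(mat 1 - outer a w - (\<Sum>i\<in>UNIV. outer (b i) (v i))) *v x = 0"
  shows "x \<in> span (insert a (range b))"
proof -
  from assms have "x = (w \<bullet> x) *\<^sub>R a + (\<Sum>i\<in>UNIV. (v i \<bullet> x) *\<^sub>R b i)"
    by (simp add: matrix_vector_mult_diff_rdistrib matrix_vector_mult_sum_left outer_mult_vec
        algebra_simps)
  also have "\<dots> \<in> span (insert a (range b))"
    by (intro span_add span_scale span_sum span_base) auto
  finally show ?thesis .
qed

text \<open>The weight \<open>|x|\<^sup>2 e\<^sup>2\<^sup>K\<^sup>t\<close> is nondecreasing, so it cannot vanish at \<open>b\<close> unless it vanishes at \<open>a\<close>.\<close>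
lemma zero_at_end_imp_zero_at_start:
  fixes x x' :: "real \<Rightarrow> 'a::real_inner"
  assumes "a \<le> b"
    and deriv: "\<And>t. t \<in> {a..b} \<Longrightarrow> (x has_vector_derivative x' t) (at t)"
    and growth: "\<And>t. t \<in> {a..b} \<Longrightarrow> norm (x' t) \<le> K * norm (x t)"
    and "x b = 0"
  shows "x a = 0"
proof -
  define k where "k t = (x t \<bullet> x t) * exp (2*K*t)" for t
  have dk: "(k has_real_derivative (2 * (x t \<bullet> x' t) + 2*K*(x t \<bullet> x t)) * exp (2*K*t)) (at t)"
    if "t \<in> {a..b}" for t
  proof -
    have "((\<lambda>t. x t \<bullet> x t) has_derivative (\<lambda>h. x t \<bullet> (h *\<^sub>R x' t) + (h *\<^sub>R x' t) \<bullet> x t)) (at t)"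
      using deriv[OF that] unfolding has_vector_derivative_def by (intro has_derivative_inner)
    moreover have "(\<lambda>h. x t \<bullet> (h *\<^sub>R x' t) + (h *\<^sub>R x' t) \<bullet> x t) = (*) (2 * (x t \<bullet> x' t))"
      by (rule ext) (simp add: inner_commute algebra_simps)
    ultimately have "((\<lambda>t. x t \<bullet> x t) has_real_derivative 2 * (x t \<bullet> x' t)) (at t)"
      unfolding has_field_derivative_def by simp
    then show ?thesis unfolding k_def
      by (auto intro!: derivative_eq_intros simp: algebra_simps)
  qed
  have nonneg: "0 \<le> (2 * (x t \<bullet> x' t) + 2*K*(x t \<bullet> x t)) * exp (2*K*t)" if "t \<in> {a..b}" for t
  proof -
    have "\<bar>x t \<bullet> x' t\<bar> \<le> norm (x t) * norm (x' t)" by (rule Cauchy_Schwarz_ineq2)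
    also have "\<dots> \<le> norm (x t) * (K * norm (x t))" using growth[OF that] by (simp add: mult_left_mono)
    also have "\<dots> = K * (x t \<bullet> x t)" by (simp add: power2_norm_eq_inner[symmetric] power2_eq_square)
    finally show ?thesis by (intro mult_nonneg_nonneg) auto
  qed
  have "k a \<le> k b"
    using dk nonneg by (intro DERIV_nonneg_imp_nondecreasing[OF \<open>a \<le> b\<close>]) auto
  with \<open>x b = 0\<close> have "x a \<bullet> x a \<le> 0" by (simp add: k_def mult_le_0_iff)
  then show ?thesis by (metis inner_gt_zero_iff not_le)
qed

lemma continuous_matrix_family_bounded:
  fixes A :: "real \<Rightarrow> real^'n^'n"
  assumes "compact S" and "continuous_on S A"
  obtains K where "\<And>t y. t \<in> S \<Longrightarrow> norm (A t *v y) \<le> K * norm y"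
proof -
  have "bounded (A ` S)" by (intro compact_imp_bounded compact_continuous_image assms)
  then obtain B where B: "\<And>t. t \<in> S \<Longrightarrow> norm (A t) \<le> B"
    unfolding bounded_iff by blast
  have "norm (A t *v y) \<le> (real CARD('n) * real CARD('n) * B) * norm y" if "t \<in> S" for t y
  proof -
    have "\<bar>A t $ i $ j\<bar> \<le> B" for i j
      using component_le_norm_cart[of "A t $ i" j] Finite_Cartesian_Product.norm_nth_le[of "A t" i] B[OF that]
      by linarith
    then have "onorm ((*v) (A t)) \<le> real CARD('n) * real CARD('n) * B"
      by (rule onorm_le_matrix_component)
    then show ?thesis
      using onorm[OF matrix_vector_mul_bounded_linear, of "A t" y]
      by (meson mult_right_mono norm_ge_zero order_trans)
  qed
  then show ?thesis by (rule that)
qed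

lemma fundamental_matrix_invertible:
  fixes Y A :: "real \<Rightarrow> real^'n^'n"
  assumes "a \<le> b" and "continuous_on {a..b} A"
    and deriv: "\<And>t. t \<in> {a..b} \<Longrightarrow> (Y has_vector_derivative (A t ** Y t)) (at t)"
    and "invertible (Y a)"
  shows "invertible (Y b)"
proof -
  obtain K where K: "\<And>t y. t \<in> {a..b} \<Longrightarrow> norm (A t *v y) \<le> K * norm y"
    using continuous_matrix_family_bounded[OF compact_Icc assms(2)] by blast
  have "v = 0" if "Y b *v v = 0" for v
  proof -
    have "((\<lambda>t. Y t *v v) has_vector_derivative (A t *v (Y t *v v))) (at t)" if "t \<in> {a..b}" for t
      using bounded_linear.has_vector_derivative[OF bounded_linear_matrix_vector_mult_left
          deriv[OF that], of v]
      by (simp add: matrix_vector_mul_assoc)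
    then have "Y a *v v = 0"
      using K \<open>Y b *v v = 0\<close> by (rule zero_at_end_imp_zero_at_start[OF \<open>a \<le> b\<close>])
    then show ?thesis
      using \<open>invertible (Y a)\<close> by (metis matrix_inv_left matrix_vector_mul_assoc matrix_vector_mult_0_right matrix_vector_mul_lid)
  qed
  then show ?thesis
    by (simp add: invertible_left_inverse matrix_left_invertible_ker)
qed

lemma continuous_on_Dmat_comp:
  fixes f :: "real^'n \<Rightarrow> real^'n"
  assumes "smooth f" and g: "continuous_on S g"
  shows "continuous_on S (\<lambda>t. Dmat f (g t))"
proof -
  have "Ck (Suc 0) f" using assms(1) unfolding smooth_def by blast
  then have c: "continuous_on UNIV (\<lambda>x. frechet_derivative f (at x) v)" for v by simp
  have "continuous_on S (\<lambda>t. frechet_derivative f (at (g t)) (axis j 1) $ i)" for i j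
    by (intro continuous_intros continuous_on_compose2[OF c g]) auto
  then show ?thesis unfolding Dmat_def matrix_def
    by (intro continuous_on_vec_lambda) auto
qed

lemma variational_matrix_invertible:
  fixes f :: "real^'n \<Rightarrow> real^'n" and Y :: "real \<Rightarrow> real^'n^'n" and g :: "real \<Rightarrow> real^'n"
  assumes "smooth f"
    and g_deriv: "\<And>t. (g has_vector_derivative g' t) (at t)"
    and Y_deriv: "\<And>t. (Y has_vector_derivative (T *\<^sub>R (Dmat f (g t) ** Y t))) (at t)"
    and "Y 0 = mat 1"
  shows "invertible (Y 1)"
proof (rule fundamental_matrix_invertible[of 0 1 "\<lambda>t. T *\<^sub>R Dmat f (g t)"])
  have "continuous_on UNIV g"
    using g_deriv by (metis continuous_at_imp_continuous_on has_vector_derivative_continuous)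
  then have "continuous_on {0..1} g" by (rule continuous_on_subset) simp
  then show "continuous_on {0..1} (\<lambda>t. T *\<^sub>R Dmat f (g t))"
    by (intro continuous_on_scaleR continuous_on_const continuous_on_Dmat_comp[OF \<open>smooth f\<close>])
  show "(Y has_vector_derivative (T *\<^sub>R Dmat f (g t) ** Y t)) (at t)" for t
    using Y_deriv by (simp add: scalar_matrix_assoc)
  show "invertible (Y 0)"
    using \<open>Y 0 = mat 1\<close> by (simp add: invertible_def)
qed simp

lemma Qproj_at_0:
  assumes "X \<phi> 0 = mat 1"
  shows "Qproj u \<rho> X wt wphi \<phi> 0 = mat 1 - outer (dt_gam u \<rho> \<phi>) (wt \<phi>)
           - (\<Sum>i\<in>UNIV. outer (dphi_gam u \<rho> i \<phi>) (wphi i \<phi>))"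
  using assms by (simp add: Qproj_def matrix_inv_mat_1)

text \<open>Since \<open>Q(\<phi>+\<rho>,0) = Q(\<phi>,1) = X(\<phi>,1) Q(\<phi>,0) X(\<phi>,1)\<^sup>-\<^sup>1\<close>, the monodromy \<open>X(\<phi>,1)\<close>
  intertwines the projections \<open>Q(\<phi>,0)\<close> and \<open>Q(\<phi>+\<rho>,0)\<close>.\<close>
lemma Gamma0_Qproj_commute:
  fixes X :: "real^'m \<Rightarrow> real \<Rightarrow> real^'n^'n" and u \<rho> wt wphi
  defines "Q \<equiv> Qproj u \<rho> X wt wphi"
  assumes X_inv: "\<And>\<phi>. invertible (X \<phi> 1)"
    and X_init: "\<And>\<phi>. X \<phi> 0 = mat 1"
    and Q_per: "\<And>\<phi> t. Q \<phi> (t + 1) = Q (\<phi> + \<rho>) t"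
  shows "Gamma0 X \<rho> (\<lambda>\<phi>. Q \<phi> 0 *v \<delta> \<phi>) = (\<lambda>\<phi>. Q \<phi> 0 *v Gamma0 X \<rho> \<delta> \<phi>)"
proof
  fix \<phi>
  define \<psi> where "\<psi> = \<phi> - \<rho>"
  define P where "P = Q \<psi> 0"
  have "Q \<phi> 0 = X \<psi> 1 ** P ** matrix_inv (X \<psi> 1)"
    using Q_per[of \<psi> 0] X_init[of \<psi>]
    by (simp add: Q_def P_def \<psi>_def Qproj_def matrix_inv_mat_1)
  then have "Q \<phi> 0 *v (X \<psi> 1 *v \<delta> \<psi>) = X \<psi> 1 *v (P *v \<delta> \<psi>)"
    by (simp add: conjugate_matrix_vector_mult[OF X_inv])
  then show "Gamma0 X \<rho> (\<lambda>\<phi>. Q \<phi> 0 *v \<delta> \<phi>) \<phi> = Q \<phi> 0 *v Gamma0 X \<rho> \<delta> \<phi>"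
    by (simp add: Gamma0_def \<psi>_def[symmetric] P_def matrix_vector_mult_diff_distrib)
qed

theorem mainTheorem13:
  fixes f :: "real^'n \<Rightarrow> real^'n" and T :: real
    and u :: "real^'m \<Rightarrow> real \<Rightarrow> real^'n" and \<rho> :: "real^'m"
    and X :: "real^'m \<Rightarrow> real \<Rightarrow> real^'n^'n"
    and \<delta> :: "real^'m \<Rightarrow> real^'n"
  assumes f_smooth: "smooth f"
    and T_pos: "T > 0"
    and u_smooth: "smooth (\<lambda>p. u (fst p) (snd p))"
    and u_per_phi: "\<forall>\<phi> t i. u (\<phi> + axis i 1) t = u \<phi> t"
    and u_per_t: "\<forall>\<phi> t. u \<phi> (t + 1) = u \<phi> t"
    and rho_indep: "rat_indep \<rho>"
    and gam_ode: "\<forall>\<phi> t. ((\<lambda>s. gam u \<rho> \<phi> s) has_vector_derivative (T *\<^sub>R f (gam u \<rho> \<phi> t))) (at t)"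
    and X_ode: "\<forall>\<phi> t. ((\<lambda>s. X \<phi> s) has_vector_derivative
                   (T *\<^sub>R (Dmat f (gam u \<rho> \<phi> t) ** X \<phi> t))) (at t)"
    and X_init: "\<forall>\<phi>. X \<phi> 0 = mat 1"
    and NH: "normally_hyperbolic u \<rho> X"
    and delta_cont: "torus_cont \<delta>"
    and null: "Gamma0 X \<rho> \<delta> = (\<lambda>\<phi>. 0)"
  shows "\<forall>\<phi>. \<delta> \<phi> \<in> span (insert (dt_gam u \<rho> \<phi>) (range (\<lambda>i. dphi_gam u \<rho> i \<phi>)))"
proof
  fix \<phi>
  obtain wt wphi where
    Q_per: "\<forall>\<phi> t. Qproj u \<rho> X wt wphi \<phi> (t + 1) = Qproj u \<rho> X wt wphi (\<phi> + \<rho>) t"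
    and bij: "bij_betw (Gamma0 X \<rho>) {(\<lambda>\<phi>. Qproj u \<rho> X wt wphi \<phi> 0 *v \<delta> \<phi>) | \<delta>. torus_cont \<delta>}
                 {(\<lambda>\<phi>. Qproj u \<rho> X wt wphi \<phi> 0 *v \<delta> \<phi>) | \<delta>. torus_cont \<delta>}"
    using NH unfolding normally_hyperbolic_def Let_def by blast
  let ?Q = "Qproj u \<rho> X wt wphi"
  have X_inv: "invertible (X \<psi> 1)" for \<psi>
    using gam_ode X_ode X_init by (intro variational_matrix_invertible[OF f_smooth]) auto
  have "torus_cont (\<lambda>\<phi>::real^'m. 0::real^'n)"
    by (simp add: torus_cont_def torus_periodic_def)
  then have "(\<lambda>\<phi>. ?Q \<phi> 0 *v 0) \<in> {(\<lambda>\<phi>. ?Q \<phi> 0 *v \<delta> \<phi>) | \<delta>. torus_cont \<delta>}" by force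
  moreover have "Gamma0 X \<rho> (\<lambda>\<phi>. ?Q \<phi> 0 *v \<delta> \<phi>) = (\<lambda>\<phi>. ?Q \<phi> 0 *v Gamma0 X \<rho> \<delta> \<phi>)"
    using X_init Q_per by (intro Gamma0_Qproj_commute X_inv) auto
  then have "Gamma0 X \<rho> (\<lambda>\<phi>. ?Q \<phi> 0 *v \<delta> \<phi>) = Gamma0 X \<rho> (\<lambda>\<phi>. ?Q \<phi> 0 *v 0)"
    unfolding null by (simp add: Gamma0_def)
  ultimately have "(\<lambda>\<phi>. ?Q \<phi> 0 *v \<delta> \<phi>) = (\<lambda>\<phi>. ?Q \<phi> 0 *v 0)"
    using bij delta_cont unfolding bij_betw_def by (blast dest: inj_onD)
  then have "?Q \<phi> 0 *v \<delta> \<phi> = 0" by (metis matrix_vector_mult_0_right)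
  then show "\<delta> \<phi> \<in> span (insert (dt_gam u \<rho> \<phi>) (range (\<lambda>i. dphi_gam u \<rho> i \<phi>)))"
    using X_init by (intro kernel_of_tangent_projection) (simp add: Qproj_at_0)
qed

end
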